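(* Let $\hat a,\hat b\in\hat{\mathbb Q}$ and suppose there exist $\hat q,\hat p\in\hat{\mathbb U}$ with $\hat a\hat q=\hat p\hat b$. Suppose $\hat a=\hat x^*\hat\lambda\hat x$ and $\hat b=\hat y^*\hat\mu\hat y$, where $\hat x,\hat y\in\hat{\mathbb U}$ and $\hat\lambda=\lambda_1+\lambda_2\varepsilon$, $\hat\mu=\mu_1+\mu_2\varepsilon\in\mathbb{DC}$ with $\lambda_1,\mu_1\notin\mathbb R$. For $\hat m\in\hat{\mathbb U}$ define $$Q(\hat m)=\hat x^*\,(\overline{\lambda_1}/|\lambda_1|)\big(1-\operatorname{Im}(\lambda_2\overline{\lambda_1}/|\lambda_1|^2)\,i\,\varepsilon\big)\,\hat m\,\hat y,$$ $$P(\hat m)=\hat x^*\,\hat m\,\big(1-\operatorname{Im}(\mu_2\overline{\mu_1}/|\mu_1|^2)\,i\,\varepsilon\big)(\overline{\mu_1}/|\mu_1|)\,\hat y.$$ Then $$\{(\hat q,\hat p)\in\hat{\mathbb U}\times\hat{\mathbb U}:\hat a\hat q=\hat p\hat b\}=\{(Q(\hat m),P(\hat m)):\hat m\in\hat{\mathbb U}\}.$$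
   Context: $\mathbb{Q}$ denotes the real quaternions with units $i,j,k$; complex numbers are identified with quaternions $a+bi$ (so $i$ above is the imaginary unit). $\varepsilon$ satisfies $\varepsilon\ne0$, $\varepsilon^2=0$ and commutes with quaternions. $\hat{\mathbb Q}$ is the set of dual quaternions $\tilde p_{st}+\tilde p_{\mathcal I}\varepsilon$ with quaternions $\tilde p_{st},\tilde p_{\mathcal I}$, conjugate $\hat p^*=\tilde p_{st}^*+\tilde p_{\mathcal I}^*\varepsilon$. $\mathbb{DC}$ is the set of dual complex numbers $a+b\varepsilon$, $a,b\in\mathbb C$. $\hat{\mathbb U}$ is the set of unit dual quaternions, i.e. $\hat p$ with $|\hat p|=1$, where $|\hat p|=|\tilde p_{st}|+\frac{\mathrm{sc}(\tilde p_{st}^*\tilde p_{\mathcal I})}{|\tilde p_{st}|}\varepsilon$ for $\tilde p_{st}\ne0$, $\mathrm{sc}(\tilde p)=\frac12(\tilde p+\tilde p^* )$; equivalently $\hat p^*\hat p=\hat p\hat p^*=1$. $\operatorname{Re},\operatorname{Im}$ are real and imaginary parts of complex numbers. *)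

theory Defs
  imports Complex_Main
begin

datatype quat = Quat (qre: real) (qi: real) (qj: real) (qk: real)

instantiation quat :: ring_1
begin
definition "0 = Quat 0 0 0 0"
definition "1 = Quat 1 0 0 0"
definition "p + q = Quat (qre p + qre q) (qi p + qi q) (qj p + qj q) (qk p + qk q)"
definition "p - q = Quat (qre p - qre q) (qi p - qi q) (qj p - qj q) (qk p - qk q)"
definition "- p = Quat (- qre p) (- qi p) (- qj p) (- qk p)"
definition "p * q = Quat
   (qre p * qre q - qi p * qi q - qj p * qj q - qk p * qk q)
   (qre p * qi q + qi p * qre q + qj p * qk q - qk p * qj q)
   (qre p * qj q - qi p * qk q + qj p * qre q + qk p * qi q)
   (qre p * qk q + qi p * qj q - qj p * qi q + qk p * qre q)"
instance
  by standard (simp_all add: zero_quat_def one_quat_def plus_quat_def minus_quat_def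
      uminus_quat_def times_quat_def algebra_simps quat.expand)
end

definition qcnj :: "quat \<Rightarrow> quat" where
  "qcnj p = Quat (qre p) (- qi p) (- qj p) (- qk p)"

definition quat_of_complex :: "complex \<Rightarrow> quat" where
  "quat_of_complex z = Quat (Re z) (Im z) 0 0"

text \<open>DQ s d stands for s + d eps, with eps squared zero and eps central.\<close>
datatype dquat = DQ (dst: quat) (ddu: quat)

instantiation dquat :: ring_1
begin
definition "0 = DQ 0 0"
definition "1 = DQ 1 0"
definition "p + q = DQ (dst p + dst q) (ddu p + ddu q)"
definition "p - q = DQ (dst p - dst q) (ddu p - ddu q)"
definition "- p = DQ (- dst p) (- ddu p)"
definition "p * q = DQ (dst p * dst q) (dst p * ddu q + ddu p * dst q)"
instance
  by standard (simp_all add: zero_dquat_def one_dquat_def plus_dquat_def minus_dquat_def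
      uminus_dquat_def times_dquat_def algebra_simps dquat.expand)
end

definition dqcnj :: "dquat \<Rightarrow> dquat" where
  "dqcnj p = DQ (qcnj (dst p)) (qcnj (ddu p))"

definition unit_dq :: "dquat \<Rightarrow> bool" where
  "unit_dq p \<longleftrightarrow> dqcnj p * p = 1 \<and> p * dqcnj p = 1"

definition dual_complex :: "complex \<Rightarrow> complex \<Rightarrow> dquat" where
  "dual_complex a b = DQ (quat_of_complex a) (quat_of_complex b)"

end

(* A dual complex number \<lambda> with non-real standard part factors as \<lambda> = |\<lambda>| \<Phi>\<^sup>*, where the
   dual modulus |\<lambda>| is a real, hence central and invertible, dual number and \<Phi> is the unit
   dual complex number occurring in Q (and its counterpart \<Psi> for \<mu> in P). Conjugating by
   x and y turns a q = p b into \<lambda> u = v \<mu> for the units u = x q y\<^sup>*, v = x p y\<^sup>*.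
   Solvability forces \<lambda> \<lambda>\<^sup>* = \<mu> \<mu>\<^sup>*, hence |\<lambda>| = |\<mu>|; cancelling this central factor
   leaves \<Phi>\<^sup>* u = v \<Psi>\<^sup>*, whose unit solutions are u = \<Phi> m, v = m \<Psi> for an arbitrary
   unit m. *)

theory Submission
  imports Defs
begin

lemma qcnj_mult: "qcnj (p * q) = qcnj q * qcnj p"
  by (simp add: qcnj_def times_quat_def algebra_simps)

lemma qcnj_add: "qcnj (p + q) = qcnj p + qcnj q"
  by (simp add: qcnj_def plus_quat_def)

lemma dqcnj_mult: "dqcnj (p * q) = dqcnj q * dqcnj p"
  by (simp add: dqcnj_def times_dquat_def qcnj_mult qcnj_add add.commute)

lemma dqcnj_dqcnj [simp]: "dqcnj (dqcnj p) = p"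
  by (simp add: dqcnj_def qcnj_def)

lemma unit_dq_mult: "unit_dq u \<Longrightarrow> unit_dq v \<Longrightarrow> unit_dq (u * v)"
  unfolding unit_dq_def dqcnj_mult by (metis mult.assoc mult_1_left)

lemma unit_dq_dqcnj: "unit_dq u \<Longrightarrow> unit_dq (dqcnj u)"
  unfolding unit_dq_def by simp

lemma unit_dq_cancel:
  assumes "unit_dq u"
  shows "u * dqcnj u = 1" "dqcnj u * u = 1" "u * (dqcnj u * z) = z" "dqcnj u * (u * z) = z"
    "z * u * dqcnj u = z" "z * dqcnj u * u = z"
  using assms unfolding unit_dq_def
  by (simp_all add: mult.assoc flip: mult.assoc[of u] mult.assoc[of "dqcnj u"])

lemma unit_dq_mult_left_cancel: "unit_dq u \<Longrightarrow> u * z = u * w \<longleftrightarrow> z = w"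
  by (metis unit_dq_cancel(4))

lemma unit_dq_mult_right_cancel: "unit_dq u \<Longrightarrow> z * u = w * u \<longleftrightarrow> z = w"
  by (metis unit_dq_cancel(5))

lemma dual_complex_mult:
  "dual_complex a b * dual_complex c d = dual_complex (a * c) (a * d + b * c)"
  by (simp add: dual_complex_def times_dquat_def quat_of_complex_def times_quat_def plus_quat_def)

lemma dual_complex_one: "1 = dual_complex 1 0"
  by (simp add: dual_complex_def one_dquat_def quat_of_complex_def one_quat_def zero_quat_def)

lemma one_minus_dual_complex: "1 - dual_complex 0 z = dual_complex 1 (- z)"
  by (simp add: dual_complex_def one_dquat_def minus_dquat_def quat_of_complex_def one_quat_def
      zero_quat_def minus_quat_def)

lemma dqcnj_dual_complex: "dqcnj (dual_complex a b) = dual_complex (cnj a) (cnj b)"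
  by (simp add: dual_complex_def dqcnj_def quat_of_complex_def qcnj_def)

lemma dual_complex_eq_iff: "dual_complex a b = dual_complex c d \<longleftrightarrow> a = c \<and> b = d"
  by (auto simp add: dual_complex_def quat_of_complex_def complex_eq_iff)

lemma dual_complex_commute:
  "dual_complex a b * dual_complex c d = dual_complex c d * dual_complex a b"
  by (simp add: dual_complex_mult algebra_simps)

lemma dual_complex_of_real_commute:
  "dual_complex (of_real r) (of_real s) * z = z * dual_complex (of_real r) (of_real s)"
  by (cases z) (simp add: dual_complex_def times_dquat_def quat_of_complex_def times_quat_def
     plus_quat_def algebra_simps quat.expand)

lemma unit_dq_dual_complex:
  assumes "cnj u * u = 1" "cnj u * v + cnj v * u = 0"
  shows "unit_dq (dual_complex u v)"
  unfolding unit_dq_def dqcnj_dual_complex dual_complex_mult dual_complex_one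
  using assms by (simp add: algebra_simps)

definition dual_modulus :: "complex \<Rightarrow> complex \<Rightarrow> dquat" where
  "dual_modulus l l' = dual_complex (cmod l) (Re (l' * cnj l) / cmod l)"

definition dual_phase_inv :: "complex \<Rightarrow> complex \<Rightarrow> dquat" where
  "dual_phase_inv l l' = dual_complex (cnj l / of_real (cmod l)) 0
     * (1 - dual_complex 0 (\<i> * of_real (Im (l' * cnj l / of_real ((cmod l)\<^sup>2)))))"

lemma dual_phase_inv_altdef:
  "(1 - dual_complex 0 (\<i> * of_real (Im (l' * cnj l / of_real ((cmod l)\<^sup>2)))))
     * dual_complex (cnj l / of_real (cmod l)) 0 = dual_phase_inv l l'"
  unfolding dual_phase_inv_def one_minus_dual_complex by (rule dual_complex_commute)

lemma unit_dq_dual_phase_inv: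
  assumes "l \<noteq> 0"
  shows "unit_dq (dual_phase_inv l l')"
proof -
  have "unit_dq (dual_complex (cnj l / of_real (cmod l)) 0)"
    by (rule unit_dq_dual_complex)
      (use assms in \<open>simp_all add: field_simps complex_norm_square[symmetric] power2_eq_square\<close>)
  moreover have "unit_dq (1 - dual_complex 0 (\<i> * of_real s))" for s
    unfolding one_minus_dual_complex by (rule unit_dq_dual_complex) (simp_all add: complex_eq_iff)
  ultimately show ?thesis
    unfolding dual_phase_inv_def by (rule unit_dq_mult)
qed

lemma complex_mult_cnj_div_cmod: "l \<noteq> 0 \<Longrightarrow> l * cnj l / of_real (cmod l) = of_real (cmod l)"
  by (simp add: field_simps complex_norm_square[symmetric] power2_eq_square)

lemma dual_complex_mult_dual_phase_inv:
  assumes "l \<noteq> 0"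
  shows "dual_complex l l' * dual_phase_inv l l' = dual_modulus l l'"
proof -
  define n where "n = cmod l"
  define w where "w = l' * cnj l"
  have "n > 0" using assms by (simp add: n_def)
  have "of_real n * - (\<i> * of_real (Im (w / of_real (n\<^sup>2)))) + w / of_real n
      = (w - \<i> * of_real (Im w)) / of_real n"
    using \<open>n > 0\<close> by (simp add: field_simps power2_eq_square)
  also have "w - \<i> * of_real (Im w) = of_real (Re w)"
    by (simp add: complex_eq_iff)
  finally have dual_part: "of_real n * - (\<i> * of_real (Im (w / of_real (n\<^sup>2)))) + w / of_real n
      = of_real (Re w / n)" by simp
  show ?thesis
    unfolding dual_phase_inv_def dual_modulus_def one_minus_dual_complex dual_complex_mult
      dual_complex_eq_iff
    by (simp only: mult_1_right mult_zero_left mult_zero_right add_0_left add_0_right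
        mult.assoc[symmetric] times_divide_eq_right simp_thms
        complex_mult_cnj_div_cmod[OF assms] dual_part[unfolded n_def w_def])
qed

lemma dual_modulus_commute: "dual_modulus l l' * z = z * dual_modulus l l'"
  unfolding dual_modulus_def by (rule dual_complex_of_real_commute)

lemma dual_modulus_mult_left_cancel:
  assumes "l \<noteq> 0" and "dual_modulus l l' * z = dual_modulus l l' * w"
  shows "z = w"
proof -
  define n where "n = cmod l"
  define s where "s = Re (l' * cnj l) / n"
  have "n \<noteq> 0" using assms(1) by (simp add: n_def)
  have "dual_complex (of_real (1 / n)) (of_real (- s / n\<^sup>2)) * dual_modulus l l' = 1"
    using \<open>n \<noteq> 0\<close> unfolding dual_modulus_def dual_complex_mult dual_complex_one n_def s_def
    by (simp add: field_simps power2_eq_square flip: of_real_mult of_real_add)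
  then show ?thesis
    using assms(2) by (metis mult.assoc mult_1_left)
qed

lemma dual_complex_mult_dqcnj:
  "dual_complex l l' * dqcnj (dual_complex l l')
     = dual_complex (of_real ((cmod l)\<^sup>2)) (of_real (2 * Re (l' * cnj l)))"
proof -
  have "l * cnj l' + l' * cnj l = of_real (2 * Re (l' * cnj l))"
    by (simp add: complex_eq_iff algebra_simps)
  then show ?thesis
    unfolding dqcnj_dual_complex dual_complex_mult complex_norm_square by simp
qed

(* The modulus is determined by \<lambda> \<lambda>\<^sup>*, a real (hence central) dual number, which
   unit factors on either side therefore do not change. *)
lemma dual_modulus_eq_if_similar:
  assumes "unit_dq u" "unit_dq v" and "dual_complex l l' * u = v * dual_complex m m'"
  shows "dual_modulus l l' = dual_modulus m m'"
proof -
  let ?L = "dual_complex l l'" and ?M = "dual_complex m m'"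
  have "?L * dqcnj ?L = (?L * u) * dqcnj (?L * u)"
    by (simp add: dqcnj_mult mult.assoc unit_dq_cancel[OF assms(1)])
  also have "\<dots> = v * (?M * dqcnj ?M) * dqcnj v"
    by (simp add: assms(3) dqcnj_mult mult.assoc)
  also have "\<dots> = ?M * dqcnj ?M"
    by (simp only: dual_complex_mult_dqcnj mult.assoc dual_complex_of_real_commute[of _ _ "dqcnj v"]
        unit_dq_cancel[OF assms(2)])
  finally have "(cmod l)\<^sup>2 = (cmod m)\<^sup>2 \<and> Re (l' * cnj l) = Re (m' * cnj m)"
    unfolding dual_complex_mult_dqcnj dual_complex_eq_iff of_real_eq_iff by simp
  then show ?thesis
    unfolding dual_modulus_def by simp
qed

definition unit_solutions :: "dquat \<Rightarrow> dquat \<Rightarrow> (dquat \<times> dquat) set" where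
  "unit_solutions a b = {(q, p). unit_dq q \<and> unit_dq p \<and> a * q = p * b}"

lemma unit_solutions_if_polar:
  assumes "unit_dq \<Phi>" "unit_dq \<Psi>" and "L * \<Phi> = N" "M * \<Psi> = N"
    and central: "\<And>z. N * z = z * N" and cancel: "\<And>z w. N * z = N * w \<Longrightarrow> z = w"
  shows "unit_solutions L M = {(\<Phi> * m, m * \<Psi>) | m. unit_dq m}"
proof -
  have L: "L = N * dqcnj \<Phi>" and M: "M = dqcnj \<Psi> * N"
    using assms(3,4) unit_dq_cancel[OF assms(1)] unit_dq_cancel[OF assms(2)] central by metis+
  have reduced: "L * u = v * M \<longleftrightarrow> dqcnj \<Phi> * u = v * dqcnj \<Psi>" for u v
    unfolding L M using cancel by (metis central mult.assoc)
  show ?thesis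
    unfolding unit_solutions_def
  proof (intro set_eqI iffI)
    fix uv assume "uv \<in> {(u, v). unit_dq u \<and> unit_dq v \<and> L * u = v * M}"
    then obtain u v where uv: "uv = (u, v)" "unit_dq u" "unit_dq v" "dqcnj \<Phi> * u = v * dqcnj \<Psi>"
      using reduced by blast
    have "u = \<Phi> * (dqcnj \<Phi> * u)"
      using unit_dq_cancel[OF assms(1)] by simp
    moreover have "v = dqcnj \<Phi> * u * \<Psi>"
      using uv(4) unit_dq_cancel[OF assms(2)] by simp
    moreover have "unit_dq (dqcnj \<Phi> * u)"
      by (intro unit_dq_mult unit_dq_dqcnj assms(1) uv(2))
    ultimately show "uv \<in> {(\<Phi> * m, m * \<Psi>) | m. unit_dq m}"
      using uv(1) by blast
  next
    fix uv assume "uv \<in> {(\<Phi> * m, m * \<Psi>) | m. unit_dq m}"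
    then obtain m where "uv = (\<Phi> * m, m * \<Psi>)" "unit_dq m" by blast
    moreover have "dqcnj \<Phi> * (\<Phi> * m) = m * \<Psi> * dqcnj \<Psi>"
      using unit_dq_cancel[OF assms(1)] unit_dq_cancel[OF assms(2)] by simp
    ultimately show "uv \<in> {(u, v). unit_dq u \<and> unit_dq v \<and> L * u = v * M}"
      using reduced assms(1,2) by (auto intro: unit_dq_mult)
  qed
qed

lemma unit_conj_eq_iff:
  assumes "unit_dq x" "unit_dq y"
  shows "dqcnj x * L * x * q = p * (dqcnj y * M * y)
    \<longleftrightarrow> L * (x * q * dqcnj y) = x * p * dqcnj y * M"
proof -
  have "dqcnj x * L * x * q = p * (dqcnj y * M * y)
    \<longleftrightarrow> x * (dqcnj x * L * x * q) * dqcnj y = x * (p * (dqcnj y * M * y)) * dqcnj y"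
    using unit_dq_mult_left_cancel[OF assms(1)] unit_dq_mult_right_cancel[OF unit_dq_dqcnj[OF assms(2)]]
    by simp
  also have "\<dots> \<longleftrightarrow> L * (x * q * dqcnj y) = x * p * dqcnj y * M"
    by (simp add: mult.assoc unit_dq_cancel[OF assms(1)] unit_dq_cancel[OF assms(2)])
  finally show ?thesis .
qed

lemma unit_solutions_conj:
  assumes "unit_dq x" "unit_dq y"
  shows "unit_solutions (dqcnj x * L * x) (dqcnj y * M * y)
    = (\<lambda>(u, v). (dqcnj x * u * y, dqcnj x * v * y)) ` unit_solutions L M"
  unfolding unit_solutions_def
proof (intro set_eqI iffI)
  fix qp assume "qp \<in> {(q, p). unit_dq q \<and> unit_dq p \<and> dqcnj x * L * x * q = p * (dqcnj y * M * y)}"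
  then obtain q p where "qp = (q, p)" "unit_dq q" "unit_dq p"
      "L * (x * q * dqcnj y) = x * p * dqcnj y * M"
    using unit_conj_eq_iff[OF assms] by blast
  moreover have "q = dqcnj x * (x * q * dqcnj y) * y" "p = dqcnj x * (x * p * dqcnj y) * y"
    by (simp_all add: mult.assoc unit_dq_cancel[OF assms(1)] unit_dq_cancel[OF assms(2)])
  ultimately show "qp \<in> (\<lambda>(u, v). (dqcnj x * u * y, dqcnj x * v * y))
      ` {(u, v). unit_dq u \<and> unit_dq v \<and> L * u = v * M}"
    using assms by (force intro: unit_dq_mult unit_dq_dqcnj)
next
  fix qp assume "qp \<in> (\<lambda>(u, v). (dqcnj x * u * y, dqcnj x * v * y))
      ` {(u, v). unit_dq u \<and> unit_dq v \<and> L * u = v * M}"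
  then obtain u v where "qp = (dqcnj x * u * y, dqcnj x * v * y)" "unit_dq u" "unit_dq v" "L * u = v * M"
    by auto
  moreover have "x * (dqcnj x * u * y) * dqcnj y = u" "x * (dqcnj x * v * y) * dqcnj y = v"
    by (simp_all add: mult.assoc unit_dq_cancel[OF assms(1)] unit_dq_cancel[OF assms(2)])
  ultimately show "qp \<in> {(q, p). unit_dq q \<and> unit_dq p \<and> dqcnj x * L * x * q = p * (dqcnj y * M * y)}"
    using assms by (simp add: unit_conj_eq_iff unit_dq_mult unit_dq_dqcnj)
qed

theorem theorem3p2:
  fixes a b x y :: dquat and l1 l2 m1 m2 :: complex
  assumes ex: "\<exists>q p. unit_dq q \<and> unit_dq p \<and> a * q = p * b"
    and x: "unit_dq x" and y: "unit_dq y"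
    and hl1: "l1 \<notin> \<real>" and hm1: "m1 \<notin> \<real>"
    and a: "a = dqcnj x * dual_complex l1 l2 * x"
    and b: "b = dqcnj y * dual_complex m1 m2 * y"
  defines "Q \<equiv> (\<lambda>m. dqcnj x * dual_complex (cnj l1 / of_real (cmod l1)) 0
                 * (1 - dual_complex 0 (\<i> * of_real (Im (l2 * cnj l1 / of_real ((cmod l1)\<^sup>2)))))
                 * m * y)"
    and "P \<equiv> (\<lambda>m. dqcnj x * m
                 * (1 - dual_complex 0 (\<i> * of_real (Im (m2 * cnj m1 / of_real ((cmod m1)\<^sup>2)))))
                 * dual_complex (cnj m1 / of_real (cmod m1)) 0 * y)"
  shows "{(q, p). unit_dq q \<and> unit_dq p \<and> a * q = p * b} = {(Q m, P m) | m. unit_dq m}"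
proof -
  let ?L = "dual_complex l1 l2" and ?M = "dual_complex m1 m2"
  let ?\<Phi> = "dual_phase_inv l1 l2" and ?\<Psi> = "dual_phase_inv m1 m2"
  have "l1 \<noteq> 0" "m1 \<noteq> 0"
    using hl1 hm1 by auto
  have conj: "{(q, p). unit_dq q \<and> unit_dq p \<and> a * q = p * b}
      = (\<lambda>(u, v). (dqcnj x * u * y, dqcnj x * v * y)) ` unit_solutions ?L ?M"
    using unit_solutions_conj[OF x y, of ?L ?M] by (simp only: a b unit_solutions_def)
  from ex obtain q p where "(q, p) \<in> {(q, p). unit_dq q \<and> unit_dq p \<and> a * q = p * b}"
    by blast
  then obtain u v where "(u, v) \<in> unit_solutions ?L ?M"
    unfolding conj by auto
  then have modulus: "dual_modulus l1 l2 = dual_modulus m1 m2"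
    unfolding unit_solutions_def by (auto intro: dual_modulus_eq_if_similar)
  have polar: "?L * ?\<Phi> = dual_modulus l1 l2" "?M * ?\<Psi> = dual_modulus l1 l2"
    using dual_complex_mult_dual_phase_inv \<open>l1 \<noteq> 0\<close> \<open>m1 \<noteq> 0\<close> modulus by simp_all
  have "unit_solutions ?L ?M = {(?\<Phi> * m, m * ?\<Psi>) | m. unit_dq m}"
    using unit_dq_dual_phase_inv \<open>l1 \<noteq> 0\<close> \<open>m1 \<noteq> 0\<close> polar dual_modulus_commute
      dual_modulus_mult_left_cancel by (intro unit_solutions_if_polar) blast+
  moreover have "Q m = dqcnj x * (?\<Phi> * m) * y" for m
    unfolding Q_def dual_phase_inv_def by (simp add: mult.assoc)
  moreover have "P m = dqcnj x * (m * ?\<Psi>) * y" for m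
    unfolding P_def dual_phase_inv_altdef[symmetric] by (simp add: mult.assoc)
  ultimately show ?thesis
    unfolding conj by auto
qed

end
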